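(* Let $F=(n_F)_{n\ge0}$ be the Fibonacci sequence, $0_F=0$, $1_F=2_F=1$, $(n+2)_F=(n+1)_F+n_F$. Then for all integers $k,n$ with $0\le k<n$, the layer $\langle\Phi_{k+1}\to\Phi_n\rangle$ of the cobweb poset of $F$ (which has $m=n-k$ levels) admits at least one tiling by blocks of type $\sigma P_m$.
   Context: Notation: $n_F\equiv F_n$. For a sequence $F=(n_F)_{n\ge0}$ of nonnegative integers, the cobweb poset of $F$ has, for each $s\ge1$, a level $\Phi_s$ consisting of $s_F$ distinct vertices (levels pairwise disjoint), plus a root level $\Phi_0$ with one vertex; for $x\in\Phi_i$, $y\in\Phi_j$ one has $x<y$ iff $i<j$. For $1\le a\le b$, the layer $\langle\Phi_a\to\Phi_b\rangle$ is the subposet on $\Phi_a\cup\dots\cup\Phi_b$; it has $m=b-a+1$ levels, and its maximal chains are exactly the tuples $(x_a,\dots,x_b)$ with $x_j\in\Phi_j$, i.e. the set $\Phi_a\times\dots\times\Phi_b$. For a permutation $\sigma$ of $\{1,\dots,m\}$, a block of type $\sigma P_m$ in this layer is the subposet induced on $V_a\cup\dots\cup V_b$ where $V_{a-1+i}\subseteq\Phi_{a-1+i}$ and $|V_{a-1+i}|=\sigma(i)_F$ for $i=1,\dots,m$ (a copy of the prime cobweb poset $P_m$, whose levels have sizes $1_F,\dots,m_F$, with its levels permuted by $\sigma$); its maximal chains form the set $V_a\times\dots\times V_b$. A tiling of the layer by blocks of type $\sigma P_m$ is a finite family of such blocks ($\sigma$ may vary from block to block) that are pairwise max-disjoint (no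 two share a maximal chain) and together contain every maximal chain of the layer; equivalently, the sets $V_a\times\dots\times V_b$ of the blocks partition $\Phi_a\times\dots\times\Phi_b$. *)

theory Defs
  imports "HOL-Number_Theory.Fib" "HOL-Combinatorics.Permutations"
begin

text \<open>Cobweb poset of a sequence F: level s (s \<ge> 1) is modelled as the vertex set
  {..<F s}; levels are kept apart by indexing vertices with their level.
  A maximal chain of the layer from level a to level b is a choice function
  x with x j \<in> level j for j \<in> {a..b}, i.e. an element of PiE.\<close>

definition cobweb_level :: "(nat \<Rightarrow> nat) \<Rightarrow> nat \<Rightarrow> nat set" where
  "cobweb_level F s = {..<F s}"

definition layer_chains :: "(nat \<Rightarrow> nat) \<Rightarrow> nat \<Rightarrow> nat \<Rightarrow> (nat \<Rightarrow> nat) set" where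
  "layer_chains F a b = PiE {a..b} (cobweb_level F)"

definition is_block ::
  "(nat \<Rightarrow> nat) \<Rightarrow> nat \<Rightarrow> nat \<Rightarrow> (nat \<Rightarrow> nat) \<Rightarrow> (nat \<Rightarrow> nat set) \<Rightarrow> bool" where
  "is_block F a b \<sigma> V \<longleftrightarrow>
     \<sigma> permutes {1..b - a + 1} \<and>
     (\<forall>j\<in>{a..b}. V j \<subseteq> cobweb_level F j) \<and>
     (\<forall>i\<in>{1..b - a + 1}. card (V (a - 1 + i)) = F (\<sigma> i))"

definition block_chains :: "nat \<Rightarrow> nat \<Rightarrow> (nat \<Rightarrow> nat set) \<Rightarrow> (nat \<Rightarrow> nat) set" where
  "block_chains a b V = PiE {a..b} V"

definition is_tiling ::
  "(nat \<Rightarrow> nat) \<Rightarrow> nat \<Rightarrow> nat \<Rightarrow> ((nat \<Rightarrow> nat) \<times> (nat \<Rightarrow> nat set)) set \<Rightarrow> bool" where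
  "is_tiling F a b T \<longleftrightarrow>
     finite T \<and>
     (\<forall>(\<sigma>, V)\<in>T. is_block F a b \<sigma> V) \<and>
     (\<forall>B1\<in>T. \<forall>B2\<in>T. B1 \<noteq> B2 \<longrightarrow>
        block_chains a b (snd B1) \<inter> block_chains a b (snd B2) = {}) \<and>
     (\<Union>B\<in>T. block_chains a b (snd B)) = layer_chains F a b"

end

theory Submission
  imports Defs
begin

text \<open>
  We generalise the layer to an arbitrary family of levels S i
  (i \<in> I) whose sizes are the Fibonacci numbers fib (k+1), ..., fib (k+m),
  assigned by a bijection g : I \<rightarrow> {k+1..k+m}, and show that the chains PiE I S
  can be tiled by blocks whose level sizes are fib 1, ..., fib m in some order.
  The proof is by induction on k + m.  If k = 0 (or m = 0) the whole family is
  one block.  Otherwise let j be the level of size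
  fib (k+m) = fib (k+1) * fib m + fib k * fib (m-1).  Cut S j into fib (k+1)
  pieces of size fib m and fib (m-1) pieces of size fib k.  Over a piece of size
  fib m, the remaining levels (sizes fib (k+1) .. fib (k+m-1)) are tiled by
  induction with m-1 levels, and the piece becomes the top level of every block.
  Over a piece of size fib k, the family has sizes fib k .. fib (k+m-1) and is
  tiled by induction with k-1.  Gluing tilings of the pieces gives a tiling of S.
\<close>

section \<open>Generalised blocks and tilings\<close>

definition profile_block ::
  "(nat \<Rightarrow> nat) \<Rightarrow> 'i set \<Rightarrow> nat \<Rightarrow> ('i \<Rightarrow> 'a set) \<Rightarrow> ('i \<Rightarrow> 'a set) \<Rightarrow> bool" where
  "profile_block F I m S V \<longleftrightarrow>
     (\<forall>i\<in>I. V i \<subseteq> S i) \<and> (\<exists>h. bij_betw h I {1..m} \<and> (\<forall>i\<in>I. card (V i) = F (h i)))"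

definition tiles ::
  "(nat \<Rightarrow> nat) \<Rightarrow> 'i set \<Rightarrow> nat \<Rightarrow> ('i \<Rightarrow> 'a set) \<Rightarrow> ('i \<Rightarrow> 'a set) set \<Rightarrow> bool" where
  "tiles F I m S T \<longleftrightarrow>
     finite T \<and> (\<forall>V\<in>T. profile_block F I m S V) \<and>
     disjoint_family_on (PiE I) T \<and> (\<Union>V\<in>T. PiE I V) = PiE I S"

definition tileable :: "(nat \<Rightarrow> nat) \<Rightarrow> 'i set \<Rightarrow> nat \<Rightarrow> ('i \<Rightarrow> 'a set) \<Rightarrow> bool" where
  "tileable F I m S \<longleftrightarrow> (\<exists>T. tiles F I m S T)"

lemma bij_betw_fun_upd_insert:
  assumes "bij_betw h I A" "j \<notin> I" "b \<notin> A"
  shows "bij_betw (h(j := b)) (insert j I) (insert b A)"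
proof -
  have "bij_betw (h(j := b)) I A"
    using assms(1,2) by (subst bij_betw_cong[where g = h]) auto
  then have "bij_betw (h(j := b)) (I \<union> {j}) (A \<union> {b})"
    using assms(3) by (intro bij_betw_combine) auto
  then show ?thesis by simp
qed

lemma profile_block_mono:
  assumes "profile_block F I m S V" "\<And>i. i \<in> I \<Longrightarrow> S i \<subseteq> S' i"
  shows "profile_block F I m S' V"
  using assms unfolding profile_block_def by blast

lemma tileable_single:
  assumes "bij_betw h I {1..m}" "\<forall>i\<in>I. card (S i) = F (h i)"
  shows "tileable F I m S"
  unfolding tileable_def tiles_def profile_block_def
  using assms by (intro exI[of _ "{S}"]) (auto simp: disjoint_family_on_def)

lemma PiE_split_level:
  assumes "j \<in> I" "\<Union>P = S j"
  shows "(\<Union>W\<in>P. PiE I (S(j := W))) = PiE I S"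
proof
  show "(\<Union>W\<in>P. PiE I (S(j := W))) \<subseteq> PiE I S"
    using assms(2) by (auto intro!: UN_least PiE_mono split: if_splits)
  show "PiE I S \<subseteq> (\<Union>W\<in>P. PiE I (S(j := W)))"
  proof
    fix x assume x: "x \<in> PiE I S"
    then obtain W where "W \<in> P" "x j \<in> W" using assms by auto
    then show "x \<in> (\<Union>W\<in>P. PiE I (S(j := W)))" using x by (auto simp: PiE_iff)
  qed
qed

lemma tileable_refine:
  assumes j: "j \<in> I" and fin: "finite (S j)"
    and P: "disjoint P" "\<Union>P = S j"
    and parts: "\<And>W. W \<in> P \<Longrightarrow> tileable F I m (S(j := W))"
  shows "tileable F I m S"
proof -
  obtain TT where TT: "\<And>W. W \<in> P \<Longrightarrow> tiles F I m (S(j := W)) (TT W)"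
    using parts unfolding tileable_def by metis
  have "finite P" using P(2) fin by (metis finite_UnionD)
  have below: "V j \<subseteq> W" if "W \<in> P" "V \<in> TT W" for W V
    using TT[OF that(1)] that(2) j unfolding tiles_def profile_block_def by fastforce
  define T where "T = (\<Union>W\<in>P. TT W)"
  have "finite T"
    using \<open>finite P\<close> TT unfolding T_def tiles_def by blast
  moreover have "profile_block F I m S V" if "V \<in> T" for V
  proof -
    obtain W where W: "W \<in> P" "V \<in> TT W" using \<open>V \<in> T\<close> unfolding T_def by blast
    then have "profile_block F I m (S(j := W)) V" using TT unfolding tiles_def by blast
    then show ?thesis by (rule profile_block_mono) (use W P(2) in auto)
  qed
  moreover have "disjoint_family_on (PiE I) T"
    unfolding disjoint_family_on_def
  proof (intro ballI impI)
    fix V1 V2 assume "V1 \<in> T" "V2 \<in> T" "V1 \<noteq> V2"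
    then obtain W1 W2 where W: "W1 \<in> P" "V1 \<in> TT W1" "W2 \<in> P" "V2 \<in> TT W2"
      unfolding T_def by blast
    show "PiE I V1 \<inter> PiE I V2 = {}"
    proof (cases "W1 = W2")
      case True
      then show ?thesis
        using TT[OF W(1)] W \<open>V1 \<noteq> V2\<close> unfolding tiles_def disjoint_family_on_def by blast
    next
      case False
      then have "V1 j \<inter> V2 j = {}"
        using below[OF W(1,2)] below[OF W(3,4)] P(1) W(1,3)
        unfolding pairwise_def disjnt_def by blast
      then show ?thesis using j by (auto simp: PiE_Int PiE_eq_empty_iff)
    qed
  qed
  moreover have "(\<Union>V\<in>T. PiE I V) = PiE I S"
  proof -
    have "(\<Union>V\<in>T. PiE I V) = (\<Union>W\<in>P. \<Union>V\<in>TT W. PiE I V)" unfolding T_def by blast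
    also have "\<dots> = (\<Union>W\<in>P. PiE I (S(j := W)))" using TT unfolding tiles_def by simp
    also have "\<dots> = PiE I S" using j P(2) by (rule PiE_split_level)
    finally show ?thesis .
  qed
  ultimately show ?thesis unfolding tileable_def tiles_def by blast
qed

lemma tileable_extend:
  assumes j: "j \<notin> I" and S: "tileable F I m S" and W: "card W = F (Suc m)"
  shows "tileable F (insert j I) (Suc m) (S(j := W))"
proof -
  obtain T where T: "tiles F I m S T" using S unfolding tileable_def by blast
  define ext where "ext = (\<lambda>V :: 'a \<Rightarrow> 'b set. V(j := W))"
  define glue where "glue = (\<lambda>(y :: 'b, x :: 'a \<Rightarrow> 'b). x(j := y))"
  have chains_ext: "PiE (insert j I) (ext V) = glue ` (W \<times> PiE I V)" for V
  proof -
    have "PiE I (ext V) = PiE I V" using j unfolding ext_def by (intro PiE_cong) auto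
    then show ?thesis unfolding glue_def ext_def by (simp add: PiE_insert_eq)
  qed
  have "finite (ext ` T)" using T unfolding tiles_def by blast
  moreover have "profile_block F (insert j I) (Suc m) (ext S) (ext V)" if "V \<in> T" for V
  proof -
    have "profile_block F I m S V" using T \<open>V \<in> T\<close> unfolding tiles_def by blast
    then obtain h where h: "\<forall>i\<in>I. V i \<subseteq> S i" "bij_betw h I {1..m}" "\<forall>i\<in>I. card (V i) = F (h i)"
      unfolding profile_block_def by blast
    have "bij_betw (h(j := Suc m)) (insert j I) (insert (Suc m) {1..m})"
      using h(2) j by (rule bij_betw_fun_upd_insert) simp
    moreover have "insert (Suc m) {1..m} = {1..Suc m}" by auto
    moreover have "\<forall>i\<in>insert j I. ext V i \<subseteq> ext S i"
      using h(1) unfolding ext_def by simp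
    moreover have "\<forall>i\<in>insert j I. card (ext V i) = F ((h(j := Suc m)) i)"
      using h(3) W j unfolding ext_def by auto
    ultimately show ?thesis unfolding profile_block_def by metis
  qed
  moreover have "disjoint_family_on (PiE (insert j I)) (ext ` T)"
    unfolding disjoint_family_on_def
  proof (intro ballI impI)
    fix V1' V2' assume "V1' \<in> ext ` T" "V2' \<in> ext ` T" "V1' \<noteq> V2'"
    then obtain V1 V2 where V: "V1 \<in> T" "V2 \<in> T" "V1 \<noteq> V2" "V1' = ext V1" "V2' = ext V2"
      by (metis imageE)
    then have "PiE I V1 \<inter> PiE I V2 = {}"
      using T unfolding tiles_def disjoint_family_on_def by blast
    then obtain i where "i \<in> I" "V1 i \<inter> V2 i = {}" by (auto simp: PiE_Int PiE_eq_empty_iff)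
    then have "\<exists>i\<in>insert j I. ext V1 i \<inter> ext V2 i = {}"
      using j unfolding ext_def by auto
    then show "PiE (insert j I) V1' \<inter> PiE (insert j I) V2' = {}"
      unfolding V(4,5) by (simp add: PiE_Int PiE_eq_empty_iff)
  qed
  moreover have "(\<Union>V'\<in>ext ` T. PiE (insert j I) V') = PiE (insert j I) (ext S)"
  proof -
    have "(\<Union>V'\<in>ext ` T. PiE (insert j I) V') = (\<Union>V\<in>T. glue ` (W \<times> PiE I V))"
      by (simp add: chains_ext)
    also have "\<dots> = glue ` (W \<times> (\<Union>V\<in>T. PiE I V))" by blast
    also have "\<dots> = PiE (insert j I) (ext S)"
      using T unfolding tiles_def by (simp add: chains_ext)
    finally show ?thesis .
  qed
  ultimately have "tiles F (insert j I) (Suc m) (ext S) (ext ` T)"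
    unfolding tiles_def by blast
  then show ?thesis unfolding tileable_def ext_def by blast
qed

section \<open>Cutting a level into pieces of equal size\<close>

lemma equal_partition:
  assumes "finite A" "card A = p * q"
  obtains P where "disjoint P" "\<Union>P = A" "\<And>W. W \<in> P \<Longrightarrow> card W = q"
proof -
  obtain f where f: "bij_betw f ({..<p} \<times> {..<q}) A"
    using assms finite_same_card_bij[of "{..<p} \<times> {..<q}" A] by (auto simp: card_cartesian_product)
  define P where "P = (\<lambda>t. f ` ({t} \<times> {..<q})) ` {..<p}"
  have inj: "inj_on f ({..<p} \<times> {..<q})" using f by (rule bij_betw_imp_inj_on)
  have "disjoint P"
    unfolding P_def pairwise_def disjnt_def using inj by (auto simp: inj_on_def)
  moreover have "\<Union>P = A"
    using bij_betw_imp_surj_on[OF f] unfolding P_def by auto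
  moreover have "card W = q" if "W \<in> P" for W
  proof -
    obtain t where t: "t < p" "W = f ` ({t} \<times> {..<q})" using \<open>W \<in> P\<close> unfolding P_def by blast
    have "inj_on f ({t} \<times> {..<q})" by (rule inj_on_subset[OF inj]) (use t(1) in auto)
    then show ?thesis using t(2) by (simp add: card_image card_cartesian_product)
  qed
  ultimately show ?thesis using that by blast
qed

lemma tileable_equal_pieces:
  assumes "j \<in> I" "finite (S j)" "card (S j) = p * q"
    and "\<And>W. W \<subseteq> S j \<Longrightarrow> card W = q \<Longrightarrow> tileable F I m (S(j := W))"
  shows "tileable F I m S"
proof -
  obtain P where P: "disjoint P" "\<Union>P = S j" "\<And>W. W \<in> P \<Longrightarrow> card W = q"
    using equal_partition[OF assms(2,3)] by blast
  show ?thesis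
    by (rule tileable_refine[where S = S and j = j, OF assms(1,2) P(1,2)]) (use P assms(4) in blast)
qed

lemma tileable_two_pieces:
  assumes "j \<in> I" "finite (S j)" "card (S j) = a + b"
    and "\<And>A. A \<subseteq> S j \<Longrightarrow> card A = a \<Longrightarrow> tileable F I m (S(j := A))"
    and "\<And>B. B \<subseteq> S j \<Longrightarrow> card B = b \<Longrightarrow> tileable F I m (S(j := B))"
  shows "tileable F I m S"
proof -
  obtain A where A: "A \<subseteq> S j" "card A = a"
    using obtain_subset_with_card_n[of a "S j"] assms(3) by auto
  have B: "S j - A \<subseteq> S j" "card (S j - A) = b"
    using A assms(2,3) by (auto simp: card_Diff_subset finite_subset)
  have "disjoint {A, S j - A}" "\<Union>{A, S j - A} = S j"
    using A(1) by (auto simp: pairwise_def disjnt_def)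
  then show ?thesis
    by (rule tileable_refine[where S = S and j = j, OF assms(1,2)]) (use A B assms(4,5) in blast)
qed

lemma tileable_cut:
  assumes j: "j \<in> I" and fin: "finite (S j)" and size: "card (S j) = p1 * q1 + p2 * q2"
    and pieces1: "\<And>W. W \<subseteq> S j \<Longrightarrow> card W = q1 \<Longrightarrow> tileable F I m (S(j := W))"
    and pieces2: "\<And>W. W \<subseteq> S j \<Longrightarrow> card W = q2 \<Longrightarrow> tileable F I m (S(j := W))"
  shows "tileable F I m S"
proof (rule tileable_two_pieces[where S = S and j = j, OF j fin size])
  fix A assume A: "A \<subseteq> S j" "card A = p1 * q1"
  show "tileable F I m (S(j := A))"
  proof (rule tileable_equal_pieces[where p = p1 and q = q1])
    show "j \<in> I" by (rule j)
    show "finite ((S(j := A)) j)" using A(1) fin by (simp add: finite_subset)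
    show "card ((S(j := A)) j) = p1 * q1" using A(2) by simp
    fix W assume "W \<subseteq> (S(j := A)) j" "card W = q1"
    then show "tileable F I m ((S(j := A))(j := W))" using A(1) pieces1 by simp
  qed
next
  fix B assume B: "B \<subseteq> S j" "card B = p2 * q2"
  show "tileable F I m (S(j := B))"
  proof (rule tileable_equal_pieces[where p = p2 and q = q2])
    show "j \<in> I" by (rule j)
    show "finite ((S(j := B)) j)" using B(1) fin by (simp add: finite_subset)
    show "card ((S(j := B)) j) = p2 * q2" using B(2) by simp
    fix W assume "W \<subseteq> (S(j := B)) j" "card W = q2"
    then show "tileable F I m ((S(j := B))(j := W))" using B(1) pieces2 by simp
  qed
qed

section \<open>Tiling Fibonacci families\<close>

lemma bij_betw_remove_top:
  fixes k m :: nat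
  assumes "bij_betw g I {k+1..k+m}" "j \<in> I" "g j = k + m" "1 \<le> m"
  shows "bij_betw g (I - {j}) {k+1..k+(m-1)}"
proof -
  have "bij_betw g (I - {j}) ({k+1..k+m} - {k+m})"
    using assms by (intro bij_betw_DiffI) auto
  moreover have "{k+1..k+m} - {k+m} = {k+1..k+(m-1)}" using assms(4) by auto
  ultimately show ?thesis by simp
qed

lemma bij_betw_lower_top:
  fixes k m :: nat
  assumes "bij_betw g I {k+1..k+m}" "j \<in> I" "g j = k + m" "1 \<le> m" "1 \<le> k"
  shows "bij_betw (g(j := k)) I {(k-1)+1..(k-1)+m}"
proof -
  have "bij_betw (g(j := k)) (insert j (I - {j})) (insert k {k+1..k+(m-1)})"
    using bij_betw_remove_top[OF assms(1-4)] by (rule bij_betw_fun_upd_insert) auto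
  moreover have "insert j (I - {j}) = I" "insert k {k+1..k+(m-1)} = {(k-1)+1..(k-1)+m}"
    using assms(2,4,5) by auto
  ultimately show ?thesis by simp
qed

lemma fib_family_tileable:
  fixes k m :: nat
  assumes "bij_betw g I {k+1..k+m}" "\<forall>i\<in>I. card (S i) = fib (g i)"
  shows "tileable fib I m S"
  using assms
proof (induction "k + m" arbitrary: k m I g S rule: less_induct)
  case less
  note g = less.prems(1) and size = less.prems(2)
  show ?case
  proof (cases "k = 0 \<or> m = 0")
    case True
    then have "{k+1..k+m} = {1..m}" by auto
    then show ?thesis using g size by (metis tileable_single)
  next
    case False
    then have k: "1 \<le> k" and m: "1 \<le> m" by auto
    have "k + m \<in> g ` I" using bij_betw_imp_surj_on[OF g] m by simp
    then obtain j where j: "j \<in> I" "g j = k + m" by (metis imageE)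
    have "card (S j) = fib (k + m)" using size j by simp
    also have "\<dots> > 0" using fib_neq_0_nat[of "k + m"] m by simp
    finally have fin: "finite (S j)" by (rule card_ge_0_finite)
    have top: "tileable fib I m (S(j := W))" if W: "card W = fib m" for W
    proof -
      have "tileable fib (I - {j}) (m - 1) S"
      proof (rule less.hyps[where k = k and m = "m - 1" and g = g])
        show "k + (m - 1) < k + m" using m by simp
        show "bij_betw g (I - {j}) {k+1..k+(m-1)}" by (rule bij_betw_remove_top[OF g j m])
        show "\<forall>i\<in>I - {j}. card (S i) = fib (g i)" using size by blast
      qed
      moreover have "card W = fib (Suc (m - 1))" using W m by simp
      ultimately have "tileable fib (insert j (I - {j})) (Suc (m - 1)) (S(j := W))"
        by (intro tileable_extend) auto
      moreover have "insert j (I - {j}) = I" "Suc (m - 1) = m" using j m by auto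
      ultimately show ?thesis by simp
    qed
    have bottom: "tileable fib I m (S(j := W))" if W: "card W = fib k" for W
    proof (rule less.hyps[where k = "k - 1" and m = m and g = "g(j := k)"])
      show "k - 1 + m < k + m" using k m by simp
      show "bij_betw (g(j := k)) I {(k-1)+1..(k-1)+m}" by (rule bij_betw_lower_top[OF g j m k])
      show "\<forall>i\<in>I. card ((S(j := W)) i) = fib ((g(j := k)) i)" using size W by simp
    qed
    have "fib (k + m) = fib (k+1) * fib m + fib (m-1) * fib k"
      using fib_add[of "m - 1" k] m by (simp add: add.commute)
    then have "card (S j) = fib (k+1) * fib m + fib (m-1) * fib k"
      using size j by simp
    then show ?thesis
      by (rule tileable_cut[where S = S and j = j, OF j(1) fin]) (blast intro: top bottom)+
  qed
qed

section \<open>Back to cobweb layers\<close>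

lemma shifted_permutation:
  fixes a b :: nat
  assumes "1 \<le> a" "a \<le> b" "bij_betw h {a..b} {1..b - a + 1}"
  obtains \<sigma> where "\<sigma> permutes {1..b - a + 1}" "\<And>i. i \<in> {1..b - a + 1} \<Longrightarrow> \<sigma> i = h (a - 1 + i)"
proof -
  define m where "m = b - a + 1"
  define \<sigma> where "\<sigma> = (\<lambda>i. if i \<in> {1..m} then h (a - 1 + i) else i)"
  have "(+) (a - 1) ` {1..m} = {1 + (a - 1)..m + (a - 1)}" by (rule image_add_atLeastAtMost)
  also have "\<dots> = {a..b}" using assms(1,2) unfolding m_def by simp
  finally have shift: "bij_betw ((+) (a - 1)) {1..m} {a..b}" by simp
  have "bij_betw (h \<circ> (+) (a - 1)) {1..m} {1..m}"
    using bij_betw_trans[OF shift] assms(3) unfolding m_def by blast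
  then have "bij_betw \<sigma> {1..m} {1..m}"
    unfolding \<sigma>_def by (subst bij_betw_cong[where g = "h \<circ> (+) (a - 1)"]) auto
  then have "\<sigma> permutes {1..m}" by (rule bij_imp_permutes) (auto simp: \<sigma>_def)
  moreover have "\<sigma> i = h (a - 1 + i)" if "i \<in> {1..m}" for i
    using that unfolding \<sigma>_def by simp
  ultimately show ?thesis using that unfolding m_def by blast
qed

lemma tiles_imp_is_tiling:
  fixes a b :: nat
  assumes "1 \<le> a" "a \<le> b" and T: "tiles F {a..b} (b - a + 1) (cobweb_level F) T"
  shows "\<exists>T'. is_tiling F a b T'"
proof -
  have "\<exists>\<sigma>. is_block F a b \<sigma> V" if "V \<in> T" for V
  proof -
    have "profile_block F {a..b} (b - a + 1) (cobweb_level F) V"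
      using T \<open>V \<in> T\<close> unfolding tiles_def by blast
    then obtain h where h: "\<forall>i\<in>{a..b}. V i \<subseteq> cobweb_level F i" "bij_betw h {a..b} {1..b - a + 1}"
      "\<forall>i\<in>{a..b}. card (V i) = F (h i)"
      unfolding profile_block_def by blast
    obtain \<sigma> where \<sigma>: "\<sigma> permutes {1..b - a + 1}" "\<And>i. i \<in> {1..b - a + 1} \<Longrightarrow> \<sigma> i = h (a - 1 + i)"
      using shifted_permutation[OF assms(1,2) h(2)] by blast
    have "card (V (a - 1 + i)) = F (\<sigma> i)" if "i \<in> {1..b - a + 1}" for i
    proof -
      have "a - 1 + i \<in> {a..b}" using that assms(1,2) by auto
      then show ?thesis using h(3) \<sigma>(2)[OF that] by simp
    qed
    then show ?thesis using \<sigma>(1) h(1) unfolding is_block_def by blast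
  qed
  then obtain sig where sig: "\<And>V. V \<in> T \<Longrightarrow> is_block F a b (sig V) V" by metis
  define T' where "T' = (\<lambda>V. (sig V, V)) ` T"
  have "finite T'" using T unfolding T'_def tiles_def by blast
  moreover have "\<forall>(\<sigma>, V)\<in>T'. is_block F a b \<sigma> V" unfolding T'_def using sig by blast
  moreover have "\<forall>B1\<in>T'. \<forall>B2\<in>T'. B1 \<noteq> B2 \<longrightarrow>
      block_chains a b (snd B1) \<inter> block_chains a b (snd B2) = {}"
  proof (intro ballI impI)
    fix B1 B2 assume "B1 \<in> T'" "B2 \<in> T'" "B1 \<noteq> B2"
    then obtain V1 V2 where "V1 \<in> T" "V2 \<in> T" "V1 \<noteq> V2" "snd B1 = V1" "snd B2 = V2"
      unfolding T'_def by force
    then show "block_chains a b (snd B1) \<inter> block_chains a b (snd B2) = {}"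
      using T unfolding tiles_def disjoint_family_on_def block_chains_def by blast
  qed
  moreover have "(\<Union>B\<in>T'. block_chains a b (snd B)) = layer_chains F a b"
    using T unfolding T'_def tiles_def block_chains_def layer_chains_def by simp
  ultimately have "is_tiling F a b T'" unfolding is_tiling_def by blast
  then show ?thesis by blast
qed

theorem theorem2:
  fixes k n :: nat
  assumes "k < n"
  shows "\<exists>T. is_tiling fib (k + 1) n T"
proof -
  have "tileable fib {k+1..n} (n - (k + 1) + 1) (cobweb_level fib)"
    using assms by (intro fib_family_tileable[where g = id and k = k]) (auto simp: cobweb_level_def)
  then obtain T where "tiles fib {k+1..n} (n - (k + 1) + 1) (cobweb_level fib) T"
    unfolding tileable_def by blast
  then show ?thesis using assms by (intro tiles_imp_is_tiling) auto
qed

end
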